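(* Let $(A,E)$ be the direct producted $W^*$-probability space over $D_N$ of $W^*$-probability spaces $(A_1,\varphi_1),\dots,(A_N,\varphi_N)$, and let $x=(a_1,\dots,a_N)\in A$. Then $x$ is $D_N$-even (resp. $D_N$-valued R-diagonal) if and only if every nonzero $a_j$ is even (resp. R-diagonal) in $(A_j,\varphi_j)$, $j=1,\dots,N$.
   Context: Each $A_j$ is a von Neumann algebra and $\varphi_j$ a state on $A_j$ with $\varphi_j(a^* )=\overline{\varphi_j(a)}$. $A=\times_{j=1}^N A_j$ with componentwise operations and adjoint $(a_1,\dots,a_N)^*=(a_1^*,\dots,a_N^* )$; $D_N=\mathbb{C}^N$ with componentwise operations, identified with the central subalgebra $\{(\alpha_1 1,\dots,\alpha_N 1)\}$ of $A$; $E((a_1,\dots,a_N))=(\varphi_1(a_1),\dots,\varphi_N(a_N))$. $D_N$-valued cumulants: $k_n(y_1,\dots,y_n)=\sum_{\sigma\in NC(n)}\prod_{V\in\sigma}E(\prod_{l\in V}y_l)\,\mu(\sigma,1_n)$; scalar cumulants $k_n^{(j)}$ analogously with $\varphi_j$. $x\in A$ is $D_N$-even if it is self-adjoint and $E(x^{2m-1})=0$ for all $m\in\mathbb{N}$; $a\in A_j$ is even if self-adjoint with $\varphi_j(a^{2m-1})=0$ for all $m$. $x$ is $D_N$-valued R-diagonal if the only nonvanishing mixed trivial $D_N$-valued cumulants of $x,x^*$ are $k_{2n}(x,x^*,\dots,x,x^* )$ or $k_{2n}(x^*,x,\dots,x^*,x)$; $a\in A_j$ is R-diagonal if the only nonvanishing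 cumulants $k^{(j)}_m(a^{u_1},\dots,a^{u_m})$, $u_l\in\{1,*\}$, are the alternating ones of even length. *)

theory Defs
  imports Complex_Main "HOL-Library.Disjoint_Sets" "HOL-Library.Function_Algebras"
begin

section \<open>Algebraic *-probability spaces (surrogate for W*-probability spaces)\<close>

record 'a sps =
  a_carrier :: "'a set"
  a_zero :: 'a
  a_one :: 'a
  a_add :: "'a \<Rightarrow> 'a \<Rightarrow> 'a"
  a_smult :: "complex \<Rightarrow> 'a \<Rightarrow> 'a"
  a_mult :: "'a \<Rightarrow> 'a \<Rightarrow> 'a"
  a_star :: "'a \<Rightarrow> 'a"
  a_phi :: "'a \<Rightarrow> complex"

definition star_prob_space :: "'a sps \<Rightarrow> bool" where
  "star_prob_space S \<longleftrightarrow>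
    (let C = a_carrier S; z = a_zero S; u = a_one S; ad = a_add S; sm = a_smult S;
         mu = a_mult S; st = a_star S; ph = a_phi S in
     z \<in> C \<and> u \<in> C \<and>
     (\<forall>a\<in>C. \<forall>b\<in>C. ad a b \<in> C \<and> mu a b \<in> C) \<and>
     (\<forall>c. \<forall>a\<in>C. sm c a \<in> C) \<and> (\<forall>a\<in>C. st a \<in> C) \<and>
     \<comment> \<open>complex vector space\<close>
     (\<forall>a\<in>C. \<forall>b\<in>C. \<forall>c\<in>C. ad (ad a b) c = ad a (ad b c)) \<and>
     (\<forall>a\<in>C. \<forall>b\<in>C. ad a b = ad b a) \<and>
     (\<forall>a\<in>C. ad z a = a) \<and>
     (\<forall>a\<in>C. \<exists>b\<in>C. ad a b = z) \<and>
     (\<forall>c. \<forall>a\<in>C. \<forall>b\<in>C. sm c (ad a b) = ad (sm c a) (sm c b)) \<and>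
     (\<forall>c d. \<forall>a\<in>C. sm (c + d) a = ad (sm c a) (sm d a)) \<and>
     (\<forall>c d. \<forall>a\<in>C. sm (c * d) a = sm c (sm d a)) \<and>
     (\<forall>a\<in>C. sm 1 a = a) \<and>
     \<comment> \<open>unital associative algebra\<close>
     (\<forall>a\<in>C. \<forall>b\<in>C. \<forall>c\<in>C. mu (mu a b) c = mu a (mu b c)) \<and>
     (\<forall>a\<in>C. mu u a = a \<and> mu a u = a) \<and>
     (\<forall>a\<in>C. \<forall>b\<in>C. \<forall>c\<in>C. mu a (ad b c) = ad (mu a b) (mu a c) \<and>
                              mu (ad a b) c = ad (mu a c) (mu b c)) \<and>
     (\<forall>k. \<forall>a\<in>C. \<forall>b\<in>C. mu (sm k a) b = sm k (mu a b) \<and> mu a (sm k b) = sm k (mu a b)) \<and>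
     \<comment> \<open>involution\<close>
     (\<forall>a\<in>C. st (st a) = a) \<and>
     (\<forall>a\<in>C. \<forall>b\<in>C. st (ad a b) = ad (st a) (st b)) \<and>
     (\<forall>k. \<forall>a\<in>C. st (sm k a) = sm (cnj k) (st a)) \<and>
     (\<forall>a\<in>C. \<forall>b\<in>C. st (mu a b) = mu (st b) (st a)) \<and>
     \<comment> \<open>state\<close>
     (\<forall>a\<in>C. \<forall>b\<in>C. ph (ad a b) = ph a + ph b) \<and>
     (\<forall>k. \<forall>a\<in>C. ph (sm k a) = k * ph a) \<and>
     ph u = 1 \<and>
     (\<forall>a\<in>C. Im (ph (mu (st a) a)) = 0 \<and> Re (ph (mu (st a) a)) \<ge> 0) \<and>
     (\<forall>a\<in>C. ph (st a) = cnj (ph a)))"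

fun spow :: "'a sps \<Rightarrow> 'a \<Rightarrow> nat \<Rightarrow> 'a" where
  "spow S a 0 = a_one S"
| "spow S a (Suc k) = a_mult S a (spow S a k)"

definition noncrossing :: "nat set set \<Rightarrow> bool" where
  "noncrossing \<sigma> \<longleftrightarrow> (\<forall>V\<in>\<sigma>. \<forall>W\<in>\<sigma>. V \<noteq> W \<longrightarrow>
      \<not> (\<exists>a b c d. a < b \<and> b < c \<and> c < d \<and> a \<in> V \<and> c \<in> V \<and> b \<in> W \<and> d \<in> W))"

definition NC :: "nat \<Rightarrow> nat set set set" where
  "NC n = {\<sigma>. partition_on {1..n} \<sigma> \<and> noncrossing \<sigma>}"

definition refines :: "nat set set \<Rightarrow> nat set set \<Rightarrow> bool" where
  "refines \<sigma> \<tau> \<longleftrightarrow> (\<forall>V\<in>\<sigma>. \<exists>W\<in>\<tau>. V \<subseteq> W)"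

text \<open>Moebius function of the lattice NC(n), via the usual recursion
  mu(s,s)=1, mu(s,t) = - sum over s \<le> r < t of mu(s,r); the extra natural-number
  argument is fuel (recursion depth), which card (NC n) always suffices for.\<close>
fun nc_mob_aux :: "nat \<Rightarrow> nat \<Rightarrow> nat set set \<Rightarrow> nat set set \<Rightarrow> int" where
  "nc_mob_aux n 0 \<sigma> \<tau> = (if \<sigma> = \<tau> then 1 else 0)"
| "nc_mob_aux n (Suc k) \<sigma> \<tau> =
     (if \<sigma> = \<tau> then 1
      else if refines \<sigma> \<tau> then
        - (\<Sum>\<rho>\<in>{\<rho>\<in>NC n. refines \<sigma> \<rho> \<and> refines \<rho> \<tau> \<and> \<rho> \<noteq> \<tau>}. nc_mob_aux n k \<sigma> \<rho>)
      else 0)"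

definition nc_mobius :: "nat \<Rightarrow> nat set set \<Rightarrow> nat set set \<Rightarrow> int" where
  "nc_mobius n \<sigma> \<tau> = nc_mob_aux n (card (NC n)) \<sigma> \<tau>"

definition one_part :: "nat \<Rightarrow> nat set set" where
  "one_part n = {{1..n}}"

definition oprod :: "('a \<Rightarrow> 'a \<Rightarrow> 'a) \<Rightarrow> 'a \<Rightarrow> (nat \<Rightarrow> 'a) \<Rightarrow> nat set \<Rightarrow> 'a" where
  "oprod mul u f V = foldr (\<lambda>l acc. mul (f l) acc) (sorted_list_of_set V) u"

text \<open>k_n(a_1,...,a_n); the argument list ys = [a_1,...,a_n], a_l = ys ! (l-1).\<close>
definition scum :: "'a sps \<Rightarrow> 'a list \<Rightarrow> complex" where
  "scum S ys = (let n = length ys in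
     \<Sum>\<sigma>\<in>NC n. (\<Prod>V\<in>\<sigma>. a_phi S (oprod (a_mult S) (a_one S) (\<lambda>l. ys ! (l - 1)) V))
               * of_int (nc_mobius n \<sigma> (one_part n)))"

definition even_el :: "'a sps \<Rightarrow> 'a \<Rightarrow> bool" where
  "even_el S a \<longleftrightarrow> a_star S a = a \<and> (\<forall>m::nat. m \<ge> 1 \<longrightarrow> a_phi S (spow S a (2*m - 1)) = 0)"

text \<open>A word u in {1,*}: True stands for *, False for 1.\<close>
definition alt_even :: "bool list \<Rightarrow> bool" where
  "alt_even u \<longleftrightarrow> even (length u) \<and> (\<forall>i. Suc i < length u \<longrightarrow> u ! i \<noteq> u ! Suc i)"

definition apply_word :: "('b \<Rightarrow> 'b) \<Rightarrow> 'b \<Rightarrow> bool list \<Rightarrow> 'b list" where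
  "apply_word st a u = map (\<lambda>b. if b then st a else a) u"

definition R_diagonal :: "'a sps \<Rightarrow> 'a \<Rightarrow> bool" where
  "R_diagonal S a \<longleftrightarrow>
     (\<forall>u. u \<noteq> [] \<longrightarrow> scum S (apply_word (a_star S) a u) \<noteq> 0 \<longrightarrow> alt_even u)"

text \<open>Elements of A are functions j \<mapsto> a_j (j \<in> {1..N}); elements of D_N are
  functions nat \<Rightarrow> complex vanishing outside {1..N}, with pointwise operations.\<close>

definition in_prod :: "nat \<Rightarrow> (nat \<Rightarrow> 'a sps) \<Rightarrow> (nat \<Rightarrow> 'a) \<Rightarrow> bool" where
  "in_prod N Af x \<longleftrightarrow> (\<forall>j\<in>{1..N}. x j \<in> a_carrier (Af j))"

definition prod_mult :: "(nat \<Rightarrow> 'a sps) \<Rightarrow> (nat \<Rightarrow> 'a) \<Rightarrow> (nat \<Rightarrow> 'a) \<Rightarrow> (nat \<Rightarrow> 'a)" where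
  "prod_mult Af x y = (\<lambda>j. a_mult (Af j) (x j) (y j))"

definition prod_one :: "(nat \<Rightarrow> 'a sps) \<Rightarrow> (nat \<Rightarrow> 'a)" where
  "prod_one Af = (\<lambda>j. a_one (Af j))"

definition prod_star :: "(nat \<Rightarrow> 'a sps) \<Rightarrow> (nat \<Rightarrow> 'a) \<Rightarrow> (nat \<Rightarrow> 'a)" where
  "prod_star Af x = (\<lambda>j. a_star (Af j) (x j))"

definition prod_pow :: "(nat \<Rightarrow> 'a sps) \<Rightarrow> (nat \<Rightarrow> 'a) \<Rightarrow> nat \<Rightarrow> (nat \<Rightarrow> 'a)" where
  "prod_pow Af x k = (\<lambda>j. spow (Af j) (x j) k)"

text \<open>Equality in A is componentwise on {1..N}.\<close>
definition prod_selfadj :: "nat \<Rightarrow> (nat \<Rightarrow> 'a sps) \<Rightarrow> (nat \<Rightarrow> 'a) \<Rightarrow> bool" where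
  "prod_selfadj N Af x \<longleftrightarrow> (\<forall>j\<in>{1..N}. prod_star Af x j = x j)"

definition prod_E :: "nat \<Rightarrow> (nat \<Rightarrow> 'a sps) \<Rightarrow> (nat \<Rightarrow> 'a) \<Rightarrow> (nat \<Rightarrow> complex)" where
  "prod_E N Af x = (\<lambda>j. if j \<in> {1..N} then a_phi (Af j) (x j) else 0)"

definition dcum :: "nat \<Rightarrow> (nat \<Rightarrow> 'a sps) \<Rightarrow> (nat \<Rightarrow> 'a) list \<Rightarrow> (nat \<Rightarrow> complex)" where
  "dcum N Af ys = (let n = length ys in
     \<Sum>\<sigma>\<in>NC n. (\<Prod>V\<in>\<sigma>. prod_E N Af (oprod (prod_mult Af) (prod_one Af) (\<lambda>l. ys ! (l - 1)) V))
               * of_int (nc_mobius n \<sigma> (one_part n)))"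

definition DN_even :: "nat \<Rightarrow> (nat \<Rightarrow> 'a sps) \<Rightarrow> (nat \<Rightarrow> 'a) \<Rightarrow> bool" where
  "DN_even N Af x \<longleftrightarrow> prod_selfadj N Af x \<and>
     (\<forall>m::nat. m \<ge> 1 \<longrightarrow> prod_E N Af (prod_pow Af x (2*m - 1)) = 0)"

definition DN_R_diagonal :: "nat \<Rightarrow> (nat \<Rightarrow> 'a sps) \<Rightarrow> (nat \<Rightarrow> 'a) \<Rightarrow> bool" where
  "DN_R_diagonal N Af x \<longleftrightarrow>
     (\<forall>u. u \<noteq> [] \<longrightarrow> dcum N Af (apply_word (prod_star Af) x u) \<noteq> 0 \<longrightarrow> alt_even u)"

end

theory Submission
  imports Defs
begin

text \<open>Both the expectation \<open>E\<close> and every \<open>D\<^sub>N\<close>-valued cumulant are computed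
  coordinatewise: the \<open>j\<close>-th coordinate of a \<open>D\<^sub>N\<close>-valued moment or cumulant of
  \<open>x = (a\<^sub>1, \<dots>, a\<^sub>N)\<close> is the corresponding scalar moment or cumulant of \<open>a\<^sub>j\<close>.
  Hence \<open>x\<close> is \<open>D\<^sub>N\<close>-even (\<open>D\<^sub>N\<close>-valued R-diagonal) iff every \<open>a\<^sub>j\<close> is even
  (R-diagonal). The restriction to nonzero \<open>a\<^sub>j\<close> changes nothing, because all moments
  and cumulants of \<open>0\<close> vanish, so \<open>0\<close> is both even and R-diagonal.\<close>

lemma of_int_fun_apply [simp]: "(of_int k :: 'a \<Rightarrow> 'b::ring_1) x = of_int k"
  by (induction k rule: int_of_nat_induct) (simp_all del: of_nat_fun_apply add: of_nat_fun)

lemma sum_fun_apply: "(\<Sum>i\<in>A. f i) x = (\<Sum>i\<in>A. f i x :: 'b::comm_monoid_add)"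
  by (induction A rule: infinite_finite_induct) auto

lemma prod_fun_apply: "(\<Prod>i\<in>A. f i) x = (\<Prod>i\<in>A. f i x :: 'b::comm_monoid_mult)"
  by (induction A rule: infinite_finite_induct) auto

lemma oprod_cong:
  assumes "finite V" "\<And>l. l \<in> V \<Longrightarrow> f l = g l"
  shows "oprod mul u f V = oprod mul u g V"
  unfolding oprod_def by (rule foldr_cong) (use assms in auto)

lemma oprod_prod_mult_apply:
  "oprod (prod_mult Af) (prod_one Af) f V j = oprod (a_mult (Af j)) (a_one (Af j)) (\<lambda>l. f l j) V"
proof -
  have "foldr (\<lambda>l acc. prod_mult Af (f l) acc) ls (prod_one Af) j
      = foldr (\<lambda>l acc. a_mult (Af j) (f l j) acc) ls (a_one (Af j))" for ls
    by (induction ls) (auto simp: prod_mult_def prod_one_def)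
  then show ?thesis unfolding oprod_def .
qed

lemma NC_finite: "\<sigma> \<in> NC n \<Longrightarrow> finite \<sigma>"
  by (rule finite_subset[of _ "Pow {1..n}"]) (auto simp: NC_def partition_on_def)

lemma NC_nonempty: "\<sigma> \<in> NC n \<Longrightarrow> n \<ge> 1 \<Longrightarrow> \<sigma> \<noteq> {}"
  by (auto simp: NC_def partition_on_def)

lemma NC_block: "\<sigma> \<in> NC n \<Longrightarrow> V \<in> \<sigma> \<Longrightarrow> V \<noteq> {} \<and> V \<subseteq> {1..n}"
  by (auto simp: NC_def partition_on_def)

lemma dcum_apply:
  assumes "ys \<noteq> []"
  shows "dcum N Af ys j = (if j \<in> {1..N} then scum (Af j) (map (\<lambda>y. y j) ys) else 0)"
proof (cases "j \<in> {1..N}")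
  case True
  have "oprod (a_mult (Af j)) (a_one (Af j)) (\<lambda>l. (ys ! (l - 1)) j) V =
        oprod (a_mult (Af j)) (a_one (Af j)) (\<lambda>l. map (\<lambda>y. y j) ys ! (l - 1)) V"
    if "\<sigma> \<in> NC (length ys)" "V \<in> \<sigma>" for \<sigma> V
  proof -
    have V: "V \<subseteq> {1..length ys}" using NC_block[OF that] by blast
    then have "finite V" by (rule finite_subset) simp
    with V show ?thesis by (intro oprod_cong) (auto simp: subset_iff)
  qed
  with True show ?thesis
    unfolding dcum_def scum_def Let_def sum_fun_apply prod_fun_apply
    by (auto simp: prod_E_def oprod_prod_mult_apply intro!: sum.cong prod.cong)
next
  case False
  have "length ys \<ge> 1" using assms by (cases ys) auto
  then have "(\<Prod>V\<in>\<sigma>. 0::complex) = 0" if "\<sigma> \<in> NC (length ys)" for \<sigma>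
    using NC_finite[OF that] NC_nonempty[OF that] by (simp add: card_gt_0_iff)
  with False show ?thesis
    unfolding dcum_def Let_def sum_fun_apply prod_fun_apply prod_E_def
    by (auto intro: sum.neutral)
qed

lemma DN_even_iff_components:
  "DN_even N Af x \<longleftrightarrow> (\<forall>j\<in>{1..N}. even_el (Af j) (x j))"
proof -
  have E_eq_0: "prod_E N Af y = 0 \<longleftrightarrow> (\<forall>j\<in>{1..N}. a_phi (Af j) (y j) = 0)" for y
    by (auto simp: prod_E_def fun_eq_iff)
  show ?thesis
    unfolding DN_even_def E_eq_0 even_el_def prod_selfadj_def prod_star_def prod_pow_def by blast
qed

lemma DN_R_diagonal_iff_components:
  "DN_R_diagonal N Af x \<longleftrightarrow> (\<forall>j\<in>{1..N}. R_diagonal (Af j) (x j))"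
proof -
  have "dcum N Af (apply_word (prod_star Af) x u) \<noteq> 0 \<longleftrightarrow>
      (\<exists>j\<in>{1..N}. scum (Af j) (apply_word (a_star (Af j)) (x j) u) \<noteq> 0)" if "u \<noteq> []" for u
  proof -
    have "map (\<lambda>y. y j) (apply_word (prod_star Af) x u) = apply_word (a_star (Af j)) (x j) u" for j
      by (simp add: apply_word_def prod_star_def)
    moreover have "apply_word (prod_star Af) x u \<noteq> []" using that by (simp add: apply_word_def)
    ultimately show ?thesis by (auto simp: fun_eq_iff dcum_apply)
  qed
  then show ?thesis unfolding DN_R_diagonal_def R_diagonal_def by blast
qed

locale star_probability_space =
  fixes S :: "'a sps"
  assumes star_prob_space: "star_prob_space S"
begin

lemma
  shows zero_closed: "a_zero S \<in> a_carrier S"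
    and one_closed: "a_one S \<in> a_carrier S"
    and mult_closed: "\<And>a b. a \<in> a_carrier S \<Longrightarrow> b \<in> a_carrier S \<Longrightarrow> a_mult S a b \<in> a_carrier S"
    and star_closed: "\<And>a. a \<in> a_carrier S \<Longrightarrow> a_star S a \<in> a_carrier S"
    and add_assoc:
      "\<And>a b c. a \<in> a_carrier S \<Longrightarrow> b \<in> a_carrier S \<Longrightarrow> c \<in> a_carrier S \<Longrightarrow>
         a_add S (a_add S a b) c = a_add S a (a_add S b c)"
    and add_commute: "\<And>a b. a \<in> a_carrier S \<Longrightarrow> b \<in> a_carrier S \<Longrightarrow> a_add S a b = a_add S b a"
    and add_zero_left: "\<And>a. a \<in> a_carrier S \<Longrightarrow> a_add S (a_zero S) a = a"
    and add_inverse: "\<And>a. a \<in> a_carrier S \<Longrightarrow> \<exists>b\<in>a_carrier S. a_add S a b = a_zero S"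
    and mult_add_distrib_right:
      "\<And>a b c. a \<in> a_carrier S \<Longrightarrow> b \<in> a_carrier S \<Longrightarrow> c \<in> a_carrier S \<Longrightarrow>
         a_mult S (a_add S a b) c = a_add S (a_mult S a c) (a_mult S b c)"
    and star_add:
      "\<And>a b. a \<in> a_carrier S \<Longrightarrow> b \<in> a_carrier S \<Longrightarrow>
         a_star S (a_add S a b) = a_add S (a_star S a) (a_star S b)"
    and phi_add:
      "\<And>a b. a \<in> a_carrier S \<Longrightarrow> b \<in> a_carrier S \<Longrightarrow>
         a_phi S (a_add S a b) = a_phi S a + a_phi S b"
  using star_prob_space unfolding star_prob_space_def Let_def by (auto 0 0)

lemma add_idem_eq_zero:
  assumes a: "a \<in> a_carrier S" and idem: "a_add S a a = a"
  shows "a = a_zero S"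
proof -
  obtain b where b: "b \<in> a_carrier S" "a_add S a b = a_zero S"
    using add_inverse[OF a] ..
  have "a_zero S = a_add S (a_add S a a) b" using b(2) idem by simp
  also have "\<dots> = a_add S a (a_zero S)" using add_assoc[OF a a b(1)] b(2) by simp
  also have "\<dots> = a" using add_commute[OF a zero_closed] add_zero_left[OF a] by simp
  finally show ?thesis by simp
qed

lemma zero_add_zero: "a_add S (a_zero S) (a_zero S) = a_zero S"
  using add_zero_left[OF zero_closed] .

lemma star_zero: "a_star S (a_zero S) = a_zero S"
proof (rule add_idem_eq_zero)
  show "a_add S (a_star S (a_zero S)) (a_star S (a_zero S)) = a_star S (a_zero S)"
    using star_add[OF zero_closed zero_closed] zero_add_zero by simp
qed (rule star_closed[OF zero_closed])

lemma phi_zero: "a_phi S (a_zero S) = 0"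
  using phi_add[OF zero_closed zero_closed] zero_add_zero by simp

lemma zero_mult:
  assumes b: "b \<in> a_carrier S"
  shows "a_mult S (a_zero S) b = a_zero S"
proof (rule add_idem_eq_zero)
  show "a_add S (a_mult S (a_zero S) b) (a_mult S (a_zero S) b) = a_mult S (a_zero S) b"
    using mult_add_distrib_right[OF zero_closed zero_closed b] zero_add_zero by simp
qed (rule mult_closed[OF zero_closed b])

lemma spow_closed: "a \<in> a_carrier S \<Longrightarrow> spow S a k \<in> a_carrier S"
  by (induction k) (simp_all add: one_closed mult_closed)

lemma even_el_zero: "even_el S (a_zero S)"
proof -
  have "spow S (a_zero S) (Suc k) = a_zero S" for k
    by (simp add: zero_mult spow_closed zero_closed)
  then have "a_phi S (spow S (a_zero S) (2*m - 1)) = 0" if "m \<ge> 1" for m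
    using that phi_zero by (cases "2*m - 1") auto
  then show ?thesis by (simp add: even_el_def star_zero)
qed

lemma oprod_const_zero:
  assumes "finite V" "V \<noteq> {}"
  shows "oprod (a_mult S) (a_one S) (\<lambda>l. a_zero S) V = a_zero S"
proof -
  have closed: "foldr (\<lambda>l acc. a_mult S (a_zero S) acc) ls (a_one S) \<in> a_carrier S" for ls :: "nat list"
    by (induction ls) (simp_all add: one_closed mult_closed zero_closed)
  have "sorted_list_of_set V \<noteq> []" using assms by simp
  then show ?thesis
    unfolding oprod_def using closed zero_mult by (cases "sorted_list_of_set V") auto
qed

lemma scum_replicate_zero:
  assumes "n \<ge> 1"
  shows "scum S (replicate n (a_zero S)) = 0"
proof -
  have "(\<Prod>V\<in>\<sigma>. a_phi S (oprod (a_mult S) (a_one S) (\<lambda>l. replicate n (a_zero S) ! (l - 1)) V)) = 0"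
    if \<sigma>: "\<sigma> \<in> NC n" for \<sigma>
  proof -
    obtain V where V: "V \<in> \<sigma>" using NC_nonempty[OF \<sigma> assms] by blast
    have ne: "V \<noteq> {}" and sub: "V \<subseteq> {1..n}" using NC_block[OF \<sigma> V] by auto
    from sub have fin: "finite V" by (rule finite_subset) simp
    have "oprod (a_mult S) (a_one S) (\<lambda>l. replicate n (a_zero S) ! (l - 1)) V
        = oprod (a_mult S) (a_one S) (\<lambda>l. a_zero S) V"
      using fin sub by (intro oprod_cong) (auto simp: subset_iff)
    also have "\<dots> = a_zero S" using fin ne by (rule oprod_const_zero)
    finally show ?thesis using NC_finite[OF \<sigma>] V phi_zero by (intro prod_zero bexI[of _ V]) auto
  qed
  then show ?thesis by (simp add: scum_def)
qed

lemma R_diagonal_zero: "R_diagonal S (a_zero S)"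
proof -
  have "apply_word (a_star S) (a_zero S) u = replicate (length u) (a_zero S)" for u
    by (simp add: apply_word_def star_zero map_replicate_const[symmetric] cong: map_cong)
  moreover have "u \<noteq> [] \<Longrightarrow> length u \<ge> 1" for u :: "bool list"
    by (cases u) auto
  ultimately show ?thesis by (simp add: R_diagonal_def scum_replicate_zero)
qed

end

theorem mainTheorem13:
  fixes N :: nat and Af :: "nat \<Rightarrow> 'a sps" and x :: "nat \<Rightarrow> 'a"
  assumes "N \<ge> 1"
    and "\<forall>j\<in>{1..N}. star_prob_space (Af j)"
    and "in_prod N Af x"
  shows "(DN_even N Af x \<longleftrightarrow>
            (\<forall>j\<in>{1..N}. x j \<noteq> a_zero (Af j) \<longrightarrow> even_el (Af j) (x j)))
       \<and> (DN_R_diagonal N Af x \<longleftrightarrow>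
            (\<forall>j\<in>{1..N}. x j \<noteq> a_zero (Af j) \<longrightarrow> R_diagonal (Af j) (x j)))"
proof -
  have "star_probability_space (Af j)" if "j \<in> {1..N}" for j
    using assms(2) that by (simp add: star_probability_space_def)
  then have "even_el (Af j) (a_zero (Af j))" "R_diagonal (Af j) (a_zero (Af j))"
    if "j \<in> {1..N}" for j
    using that star_probability_space.even_el_zero star_probability_space.R_diagonal_zero by blast+
  then show ?thesis
    unfolding DN_even_iff_components DN_R_diagonal_iff_components by metis
qed

end
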